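(* Define functions $b_1,b_2,b_3$ on $\mathbb{R}$ by $b_1(s)=e^{1/s}$ for $s<0$, $b_1(s)=e^{-1/(s-2)}$ for $s>2$, $b_1(s)=0$ otherwise; $b_2(s)=e^{-1/(s(1-s))}$ for $0<s<1$, $b_2(s)=0$ otherwise; $b_3(s)=e^{-1/((s-1)(2-s))}$ for $1<s<2$, $b_3(s)=0$ otherwise. Let $\gamma$ be a curve in $\mathbb{E}^4$ with a Bishop frame $\mathbb{B}$ whose coefficient matrix is $\begin{pmatrix}0&b_1&b_2&b_3\\-b_1&0&0&0\\-b_2&0&0&0\\-b_3&0&0&0\end{pmatrix}$. Then $\gamma$ is a regular curve which does not admit a generalized Bishop frame of type C.
   Context: A regular curve $\gamma: I\to\mathbb{E}^4$ ($I$ an open interval) is considered with arc-length parametrization; $\mathbb{T}=\gamma'$ is its unit tangent vector. A frame on $\gamma$ is an ordered orthonormal frame $(\mathbb{T},\mathbb{Z}_1,\mathbb{Z}_2,\mathbb{Z}_3)$ of smooth vector fields along $\gamma$ whose first vector is $\mathbb{T}$; it is identified with the smooth map $\mathbb{Z}: I\to O(4)$ whose rows are these vectors. Its coefficient matrix is the $\mathfrak{o}(4)$-valued function $X$ with $\mathbb{Z}'=X\mathbb{Z}$. A Bishop frame is a frame whose coefficient matrix has the form given in the claim (with some functions in place of $b_1,b_2,b_3$). A frame is of type C if, after possibly permuting $\mathbb{Z}_1,\mathbb{Z}_2,\mathbb{Z}_3$ (keeping $\mathbb{T}$ first), its coefficient matrix has the form $\begin{pmatrix}0&x_1&x_2&0\\-x_1&0&0&x_3\\-x_2&0&0&0\\0&-x_3&0&0\end{pmatrix}$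 for some smooth functions $x_1,x_2,x_3$. *)

theory Defs
  imports "HOL-Analysis.Analysis"
begin

definition smooth_fun :: "(real \<Rightarrow> 'a::real_normed_vector) \<Rightarrow> bool" where
  "smooth_fun f \<longleftrightarrow> (\<exists>D :: nat \<Rightarrow> real \<Rightarrow> 'a. D 0 = f \<and>
      (\<forall>n t. (D n has_vector_derivative D (Suc n) t) (at t)))"

text \<open>Regular curve in E^4 (parameter interval = the whole real line).\<close>
definition regular_curve :: "(real \<Rightarrow> real^4) \<Rightarrow> bool" where
  "regular_curve \<gamma> \<longleftrightarrow> smooth_fun \<gamma> \<and>
      (\<forall>t. \<gamma> differentiable (at t) \<and> vector_derivative \<gamma> (at t) \<noteq> 0)"

text \<open>A frame on gamma: F t 0 = T (the tangent gamma'), F t 1, F t 2, F t 3 = Z1, Z2, Z3;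
  smooth, orthonormal at every parameter.\<close>
definition is_frame :: "(real \<Rightarrow> real^4) \<Rightarrow> (real \<Rightarrow> nat \<Rightarrow> real^4) \<Rightarrow> bool" where
  "is_frame \<gamma> F \<longleftrightarrow>
     (\<forall>i<4. smooth_fun (\<lambda>t. F t i)) \<and>
     (\<forall>t. \<forall>i<4. \<forall>j<4. F t i \<bullet> F t j = (if i = j then 1 else 0)) \<and>
     (\<forall>t. (\<gamma> has_vector_derivative F t 0) (at t))"

text \<open>X is the coefficient matrix of F, i.e. Z' = X Z (rows of Z are the frame vectors).\<close>
definition coeff_matrix :: "(real \<Rightarrow> nat \<Rightarrow> real^4) \<Rightarrow> (real \<Rightarrow> nat \<Rightarrow> nat \<Rightarrow> real) \<Rightarrow> bool" where
  "coeff_matrix F X \<longleftrightarrow>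
     (\<forall>t. \<forall>i<4. ((\<lambda>s. F s i) has_vector_derivative (\<Sum>j<4. X t i j *\<^sub>R F t j)) (at t))"

definition typeC_matrix :: "(real \<Rightarrow> real) \<Rightarrow> (real \<Rightarrow> real) \<Rightarrow> (real \<Rightarrow> real) \<Rightarrow> real \<Rightarrow> nat \<Rightarrow> nat \<Rightarrow> real" where
  "typeC_matrix x1 x2 x3 t i j =
     (if i = 0 \<and> j = 1 then x1 t else if i = 0 \<and> j = 2 then x2 t
      else if i = 1 \<and> j = 0 then - x1 t else if i = 2 \<and> j = 0 then - x2 t
      else if i = 1 \<and> j = 3 then x3 t else if i = 3 \<and> j = 1 then - x3 t
      else 0)"

definition typeC_frame :: "(real \<Rightarrow> real^4) \<Rightarrow> (real \<Rightarrow> nat \<Rightarrow> real^4) \<Rightarrow> bool" where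
  "typeC_frame \<gamma> F \<longleftrightarrow> is_frame \<gamma> F \<and>
     (\<exists>p x1 x2 x3. p permutes {1,2,3} \<and> smooth_fun x1 \<and> smooth_fun x2 \<and> smooth_fun x3 \<and>
        coeff_matrix (\<lambda>t i. F t (p i)) (typeC_matrix x1 x2 x3))"

definition b1 :: "real \<Rightarrow> real" where
  "b1 s = (if s < 0 then exp (1 / s) else if s > 2 then exp (- 1 / (s - 2)) else 0)"

definition b2 :: "real \<Rightarrow> real" where
  "b2 s = (if 0 < s \<and> s < 1 then exp (- 1 / (s * (1 - s))) else 0)"

definition b3 :: "real \<Rightarrow> real" where
  "b3 s = (if 1 < s \<and> s < 2 then exp (- 1 / ((s - 1) * (2 - s))) else 0)"

definition bishopB :: "real \<Rightarrow> nat \<Rightarrow> nat \<Rightarrow> real" where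
  "bishopB t i j =
     (if i = 0 \<and> j = 1 then b1 t else if i = 0 \<and> j = 2 then b2 t
      else if i = 0 \<and> j = 3 then b3 t
      else if i = 1 \<and> j = 0 then - b1 t else if i = 2 \<and> j = 0 then - b2 t
      else if i = 3 \<and> j = 0 then - b3 t else 0)"

end

theory Submission
  imports Defs
begin

(* Suppose G is a frame of type C along the same curve, reindexed so that G 0 = T and
   G 0' = x1 G 1 + x2 G 2, G 2' = - x2 T.  Both G 2 and the normal vectors B 1, B 2, B 3 of the
   Bishop frame have tangential derivatives, so the inner products G 2 . B i are constant.
   On the other hand G 3 is orthogonal to T' = b1 B 1 + b2 B 2 + b3 B 3; since each b i is
   positive exactly on its own interval and the intervals meet at 0, 1 and 2, continuity
   forces G 3 to be orthogonal to two of B 1, B 2, B 3 at each of these points.  There G 3 is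
   therefore parallel to the third one, and G 2, being orthogonal to G 3, is orthogonal to
   B 3 at 0, to B 1 at 1 and to B 2 at 2.  By constancy G 2 is orthogonal to the whole
   Bishop frame, which is impossible for a unit vector. *)

definition orthonormal_family :: "nat \<Rightarrow> (nat \<Rightarrow> 'a::real_inner) \<Rightarrow> bool" where
  "orthonormal_family n u \<longleftrightarrow> (\<forall>i<n. \<forall>j<n. u i \<bullet> u j = (if i = j then 1 else 0))"

lemma orthonormal_family_expansion:
  fixes u :: "nat \<Rightarrow> 'a::euclidean_space"
  assumes u: "orthonormal_family DIM('a) u"
  shows "(\<Sum>i<DIM('a). (x \<bullet> u i) *\<^sub>R u i) = x"
proof -
  let ?U = "u ` {..<DIM('a)}"
  have inj: "inj_on u {..<DIM('a)}"
    using u unfolding orthonormal_family_def by (intro inj_onI) (metis lessThan_iff zero_neq_one)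
  have orth: "pairwise orthogonal ?U"
    using u unfolding orthonormal_family_def pairwise_def orthogonal_def by fastforce
  have unit: "norm v = 1" if "v \<in> ?U" for v
    using that u unfolding orthonormal_family_def by (auto simp: norm_eq_1)
  have "0 \<notin> ?U"
    using unit by fastforce
  with orth have "independent ?U"
    by (rule pairwise_orthogonal_independent)
  moreover have "card ?U = DIM('a)"
    using inj by (simp add: card_image)
  ultimately have "x \<in> span ?U"
    using card_ge_dim_independent[of ?U UNIV] by auto
  then have "(\<Sum>v\<in>?U. (x \<bullet> v) *\<^sub>R v) = x"
    using orth unit by (intro orthonormal_basis_expand) auto
  then show ?thesis
    using inj by (simp add: sum.reindex)
qed

lemma orthonormal_family_orthogonal_all_eq_0:
  fixes u :: "nat \<Rightarrow> 'a::euclidean_space"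
  assumes "orthonormal_family DIM('a) u" and "\<And>i. i < DIM('a) \<Longrightarrow> x \<bullet> u i = 0"
  shows "x = 0"
  using orthonormal_family_expansion[OF assms(1), of x] assms(2) by simp

lemma orthonormal_family_orthogonal_to_parallel:
  fixes u :: "nat \<Rightarrow> 'a::euclidean_space"
  assumes u: "orthonormal_family DIM('a) u" and k: "k < DIM('a)"
    and x: "x \<noteq> 0" "\<And>i. i < DIM('a) \<Longrightarrow> i \<noteq> k \<Longrightarrow> x \<bullet> u i = 0"
    and y: "y \<bullet> x = 0"
  shows "y \<bullet> u k = 0"
proof -
  have "x = (\<Sum>i<DIM('a). (x \<bullet> u i) *\<^sub>R u i)"
    using orthonormal_family_expansion[OF u] by simp
  also have "\<dots> = (\<Sum>i<DIM('a). if i = k then (x \<bullet> u k) *\<^sub>R u k else 0)"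
    using x(2) by (intro sum.cong) auto
  also have "\<dots> = (x \<bullet> u k) *\<^sub>R u k"
    using k by simp
  finally have x_parallel: "x = (x \<bullet> u k) *\<^sub>R u k" .
  then have "x \<bullet> u k \<noteq> 0"
    using x(1) by (metis scale_zero_left)
  moreover have "(x \<bullet> u k) * (y \<bullet> u k) = 0"
    using y x_parallel by (metis inner_scaleR_right mult.commute)
  ultimately show ?thesis by simp
qed

lemma inner_constant_if_derivatives_cancel:
  fixes u v :: "real \<Rightarrow> 'a::real_inner"
  assumes "\<And>t. (u has_vector_derivative u' t) (at t)"
    and "\<And>t. (v has_vector_derivative v' t) (at t)"
    and "\<And>t. u t \<bullet> v' t + u' t \<bullet> v t = 0"
  shows "u s \<bullet> v s = u r \<bullet> v r"
proof (rule DERIV_isconst_all[of "\<lambda>t. u t \<bullet> v t", rule_format])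
  fix t
  have "((\<lambda>t. u t \<bullet> v t) has_real_derivative (u t \<bullet> v' t + u' t \<bullet> v t)) (at t)"
    using assms(1,2)[of t] unfolding has_vector_derivative_def has_field_derivative_def
    by (auto intro!: derivative_eq_intros simp: algebra_simps)
  then show "((\<lambda>t. u t \<bullet> v t) has_real_derivative 0) (at t)"
    using assms(3) by simp
qed

lemma relatively_parallel_inner_constant:
  fixes V W T :: "real \<Rightarrow> 'a::real_inner"
  assumes "\<And>t. (V has_vector_derivative f t *\<^sub>R T t) (at t)"
    and "\<And>t. (W has_vector_derivative g t *\<^sub>R T t) (at t)"
    and "\<And>t. V t \<bullet> T t = 0" and "\<And>t. W t \<bullet> T t = 0"
  shows "V s \<bullet> W s = V r \<bullet> W r"
proof (rule inner_constant_if_derivatives_cancel[where u' = "\<lambda>t. f t *\<^sub>R T t" and v' = "\<lambda>t. g t *\<^sub>R T t"])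
  fix t
  have "T t \<bullet> W t = 0"
    using assms(4) by (simp add: inner_commute)
  then show "V t \<bullet> (g t *\<^sub>R T t) + (f t *\<^sub>R T t) \<bullet> W t = 0"
    using assms(3) by simp
qed (fact assms)+

lemma continuous_constant_at_interval_ends:
  fixes f :: "real \<Rightarrow> 'a::t1_space"
  assumes "continuous_on {a..b} f" and "a < b" and "\<And>t. a < t \<Longrightarrow> t < b \<Longrightarrow> f t = c"
  shows "f a = c" and "f b = c"
  using continuous_constant_on_closure[of "{a<..<b}" f c] assms by auto

lemma smooth_fun_if_derivative_smooth:
  assumes "smooth_fun f'" and "\<And>t. (f has_vector_derivative f' t) (at t)"
  shows "smooth_fun f"
proof -
  obtain D where "D 0 = f'" and D: "\<And>n t. (D n has_vector_derivative D (Suc n) t) (at t)"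
    using assms(1) unfolding smooth_fun_def by blast
  then have "((case n of 0 \<Rightarrow> f | Suc m \<Rightarrow> D m) has_vector_derivative
      (case Suc n of 0 \<Rightarrow> f | Suc m \<Rightarrow> D m) t) (at t)" for n t
    using assms(2) by (cases n) auto
  then show ?thesis
    unfolding smooth_fun_def by (intro exI[of _ "case_nat f D"]) auto
qed

lemma is_frame_orthonormal: "is_frame \<gamma> F \<Longrightarrow> orthonormal_family DIM(real^4) (F t)"
  by (simp add: is_frame_def orthonormal_family_def)

lemma is_frame_tangent_eq: "is_frame \<gamma> F \<Longrightarrow> is_frame \<gamma> G \<Longrightarrow> G t 0 = F t 0"
  unfolding is_frame_def by (metis vector_derivative_unique_at)

lemma is_frame_regular_curve:
  assumes "is_frame \<gamma> F"
  shows "regular_curve \<gamma>"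
proof -
  have \<gamma>': "(\<gamma> has_vector_derivative F t 0) (at t)" for t
    using assms unfolding is_frame_def by blast
  have "F t 0 \<bullet> F t 0 = 1" for t
    using assms unfolding is_frame_def by auto
  then have "vector_derivative \<gamma> (at t) \<noteq> 0" for t
    unfolding vector_derivative_at[OF \<gamma>'] by (metis inner_zero_left zero_neq_one)
  moreover have "smooth_fun (\<lambda>t. F t 0)"
    using assms unfolding is_frame_def by simp
  then have "smooth_fun \<gamma>"
    using \<gamma>' by (rule smooth_fun_if_derivative_smooth)
  moreover have "\<gamma> differentiable (at t)" for t
    using \<gamma>' by (rule differentiableI_vector)
  ultimately show ?thesis
    unfolding regular_curve_def by blast
qed

lemma typeC_frame_reindexed:
  assumes "typeC_frame \<gamma> F"
  obtains G x1 x2 x3 where "is_frame \<gamma> G" and "coeff_matrix G (typeC_matrix x1 x2 x3)"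
proof -
  obtain p x1 x2 x3 where F: "is_frame \<gamma> F" and p: "p permutes {1,2,3}"
    and cm: "coeff_matrix (\<lambda>t i. F t (p i)) (typeC_matrix x1 x2 x3)"
    using assms unfolding typeC_frame_def by blast
  have p0: "p 0 = 0"
    using p by (simp add: permutes_not_in)
  have p_less: "p i < 4" if "i < 4" for i
    using that p0 permutes_in_image[OF p, of i] by (cases "i = 0") auto
  have p_eq: "p i = p j \<longleftrightarrow> i = j" for i j
    using permutes_inj[OF p] by (simp add: inj_eq)
  have "is_frame \<gamma> (\<lambda>t i. F t (p i))"
    using F p_less p_eq p0 unfolding is_frame_def by auto
  then show thesis
    using cm by (rule that)
qed

lemma b1_b2_b3_on_intervals:
  "t < 0 \<Longrightarrow> b1 t > 0 \<and> b2 t = 0 \<and> b3 t = 0"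
  "2 < t \<Longrightarrow> b1 t > 0 \<and> b2 t = 0 \<and> b3 t = 0"
  "0 < t \<Longrightarrow> t < 1 \<Longrightarrow> b1 t = 0 \<and> b2 t > 0 \<and> b3 t = 0"
  "1 < t \<Longrightarrow> t < 2 \<Longrightarrow> b1 t = 0 \<and> b2 t = 0 \<and> b3 t > 0"
  by (auto simp: b1_def b2_def b3_def)

lemma b1_b2_b3_combination_eq_0_imp_vanishing:
  fixes f1 f2 f3 :: "real \<Rightarrow> real"
  assumes "continuous_on UNIV f1" "continuous_on UNIV f2" "continuous_on UNIV f3"
    and comb: "\<And>t. b1 t * f1 t + b2 t * f2 t + b3 t * f3 t = 0"
  shows "f1 0 = 0" "f2 0 = 0" "f2 1 = 0" "f3 1 = 0" "f1 2 = 0" "f3 2 = 0"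
proof -
  have "f1 t = 0" if "t < 0 \<or> 2 < t" for t
    using comb[of t] b1_b2_b3_on_intervals(1,2)[of t] that by auto
  then show "f1 0 = 0" "f1 2 = 0"
    using continuous_constant_at_interval_ends[of "-1" 0 f1 0]
      continuous_constant_at_interval_ends[of 2 3 f1 0] assms(1)
    by (auto intro: continuous_on_subset)
  have "f2 t = 0" if "0 < t" "t < 1" for t
    using comb[of t] b1_b2_b3_on_intervals(3)[of t] that by auto
  then show "f2 0 = 0" "f2 1 = 0"
    using continuous_constant_at_interval_ends[of 0 1 f2 0] assms(2)
    by (auto intro: continuous_on_subset)
  have "f3 t = 0" if "1 < t" "t < 2" for t
    using comb[of t] b1_b2_b3_on_intervals(4)[of t] that by auto
  then show "f3 1 = 0" "f3 2 = 0"
    using continuous_constant_at_interval_ends[of 1 2 f3 0] assms(3)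
    by (auto intro: continuous_on_subset)
qed

lemma bishopB_derivatives:
  assumes "coeff_matrix B bishopB"
  shows "((\<lambda>s. B s 0) has_vector_derivative b1 t *\<^sub>R B t 1 + b2 t *\<^sub>R B t 2 + b3 t *\<^sub>R B t 3) (at t)"
    and "i \<in> {1,2,3} \<Longrightarrow> ((\<lambda>s. B s i) has_vector_derivative - bishopB t 0 i *\<^sub>R B t 0) (at t)"
proof -
  have B': "((\<lambda>s. B s i) has_vector_derivative (\<Sum>j<4. bishopB t i j *\<^sub>R B t j)) (at t)" if "i < 4" for i
    using assms that unfolding coeff_matrix_def by blast
  show "((\<lambda>s. B s 0) has_vector_derivative b1 t *\<^sub>R B t 1 + b2 t *\<^sub>R B t 2 + b3 t *\<^sub>R B t 3) (at t)"
    using B'[of 0] by (simp add: bishopB_def eval_nat_numeral)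
  show "((\<lambda>s. B s i) has_vector_derivative - bishopB t 0 i *\<^sub>R B t 0) (at t)" if "i \<in> {1,2,3}"
    using B'[of i] that by (auto simp: bishopB_def eval_nat_numeral)
qed

lemma typeC_matrix_derivatives:
  assumes "coeff_matrix G (typeC_matrix x1 x2 x3)"
  shows "((\<lambda>s. G s 0) has_vector_derivative x1 t *\<^sub>R G t 1 + x2 t *\<^sub>R G t 2) (at t)"
    and "((\<lambda>s. G s 2) has_vector_derivative - x2 t *\<^sub>R G t 0) (at t)"
proof -
  have G': "((\<lambda>s. G s i) has_vector_derivative (\<Sum>j<4. typeC_matrix x1 x2 x3 t i j *\<^sub>R G t j)) (at t)"
    if "i < 4" for i
    using assms that unfolding coeff_matrix_def by blast
  from G'[of 0] G'[of 2] show
    "((\<lambda>s. G s 0) has_vector_derivative x1 t *\<^sub>R G t 1 + x2 t *\<^sub>R G t 2) (at t)"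
    "((\<lambda>s. G s 2) has_vector_derivative - x2 t *\<^sub>R G t 0) (at t)"
    by (simp_all add: typeC_matrix_def eval_nat_numeral)
qed

lemma coeff_matrix_continuous:
  assumes "coeff_matrix F X" and "i < 4"
  shows "continuous_on UNIV (\<lambda>t. F t i)"
  using assms unfolding coeff_matrix_def
  by (intro continuous_at_imp_continuous_on) (blast intro: has_vector_derivative_continuous)

lemma typeC_frame_third_normal_orthogonal_curvature:
  assumes "is_frame \<gamma> G" and "coeff_matrix G (typeC_matrix x1 x2 x3)"
    and "((\<lambda>s. G s 0) has_vector_derivative v) (at t)"
  shows "G t 3 \<bullet> v = 0"
proof -
  have "v = x1 t *\<^sub>R G t 1 + x2 t *\<^sub>R G t 2"
    using assms(3) typeC_matrix_derivatives(1)[OF assms(2)] by (rule vector_derivative_unique_at)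
  moreover have "G t 3 \<bullet> G t 1 = 0" "G t 3 \<bullet> G t 2 = 0"
    using assms(1) unfolding is_frame_def by auto
  ultimately show ?thesis
    by (simp add: inner_add_right)
qed

lemma bishopB_relatively_parallel_inner_constant:
  assumes B: "is_frame \<gamma> B" "coeff_matrix B bishopB" and i: "i \<in> {1,2,3}"
    and V: "\<And>t. (V has_vector_derivative f t *\<^sub>R B t 0) (at t)" "\<And>t. V t \<bullet> B t 0 = 0"
  shows "V s \<bullet> B s i = V r \<bullet> B r i"
proof (rule relatively_parallel_inner_constant[OF V(1) bishopB_derivatives(2)[OF B(2) i] V(2)])
  show "B t i \<bullet> B t 0 = 0" for t
    using B(1) i unfolding is_frame_def by auto
qed

lemma bishopB_orthogonal_curvature_at_breakpoints:
  assumes B: "coeff_matrix B bishopB" and N: "continuous_on UNIV N"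
    and perp: "\<And>t. N t \<bullet> (b1 t *\<^sub>R B t 1 + b2 t *\<^sub>R B t 2 + b3 t *\<^sub>R B t 3) = 0"
  shows "N 0 \<bullet> B 0 1 = 0" "N 0 \<bullet> B 0 2 = 0" "N 1 \<bullet> B 1 2 = 0"
    "N 1 \<bullet> B 1 3 = 0" "N 2 \<bullet> B 2 1 = 0" "N 2 \<bullet> B 2 3 = 0"
proof -
  have "b1 t * (N t \<bullet> B t 1) + b2 t * (N t \<bullet> B t 2) + b3 t * (N t \<bullet> B t 3) = 0" for t
    using perp[of t] by (simp add: inner_add_right)
  moreover have "continuous_on UNIV (\<lambda>t. N t \<bullet> B t i)" if "i < 4" for i
    using N coeff_matrix_continuous[OF B that] by (rule continuous_on_inner)
  ultimately show "N 0 \<bullet> B 0 1 = 0" "N 0 \<bullet> B 0 2 = 0" "N 1 \<bullet> B 1 2 = 0"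
    "N 1 \<bullet> B 1 3 = 0" "N 2 \<bullet> B 2 1 = 0" "N 2 \<bullet> B 2 3 = 0"
    using b1_b2_b3_combination_eq_0_imp_vanishing[of "\<lambda>t. N t \<bullet> B t 1"
        "\<lambda>t. N t \<bullet> B t 2" "\<lambda>t. N t \<bullet> B t 3"] by auto
qed

lemma bishopB_frame_not_typeC:
  assumes B: "is_frame \<gamma> B" "coeff_matrix B bishopB" and G: "is_frame \<gamma> G"
  shows "\<not> coeff_matrix G (typeC_matrix x1 x2 x3)"
proof
  assume G_typeC: "coeff_matrix G (typeC_matrix x1 x2 x3)"
  have onB: "orthonormal_family DIM(real^4) (B t)" for t
    using B(1) by (rule is_frame_orthonormal)
  have G_on: "G t i \<bullet> G t j = (if i = j then 1 else 0)" if "i < 4" "j < 4" for t i j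
    using G that unfolding is_frame_def by blast
  have T: "G t 0 = B t 0" for t
    using B(1) G by (rule is_frame_tangent_eq)
  have G2_B_const: "G s 2 \<bullet> B s i = G r 2 \<bullet> B r i" if "i \<in> {1,2,3}" for s r i
  proof (rule bishopB_relatively_parallel_inner_constant[OF B that])
    show "((\<lambda>s. G s 2) has_vector_derivative (- x2 t) *\<^sub>R B t 0) (at t)" for t
      using typeC_matrix_derivatives(2)[OF G_typeC, of t] T by simp
    show "G t 2 \<bullet> B t 0 = 0" for t
      using G_on[of 2 0 t] T by simp
  qed
  have "continuous_on UNIV (\<lambda>t. G t 3)"
    using coeff_matrix_continuous[OF G_typeC] by simp
  moreover have "G t 3 \<bullet> (b1 t *\<^sub>R B t 1 + b2 t *\<^sub>R B t 2 + b3 t *\<^sub>R B t 3) = 0" for t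
    using G G_typeC bishopB_derivatives(1)[OF B(2)] T
    by (intro typeC_frame_third_normal_orthogonal_curvature) auto
  ultimately have G3_perp: "G 0 3 \<bullet> B 0 1 = 0" "G 0 3 \<bullet> B 0 2 = 0" "G 1 3 \<bullet> B 1 2 = 0"
    "G 1 3 \<bullet> B 1 3 = 0" "G 2 3 \<bullet> B 2 1 = 0" "G 2 3 \<bullet> B 2 3 = 0"
    using bishopB_orthogonal_curvature_at_breakpoints[OF B(2)] by blast+
  have G2_perp: "G t 2 \<bullet> B t k = 0"
    if "k \<in> {1,2,3}" and "\<forall>i\<in>{1,2,3} - {k}. G t 3 \<bullet> B t i = 0" for t k
  proof (rule orthonormal_family_orthogonal_to_parallel[OF onB, of k "G t 3"])
    show "G t 3 \<bullet> B t i = 0" if "i < DIM(real^4)" "i \<noteq> k" for i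
      using that \<open>\<forall>i\<in>{1,2,3} - {k}. G t 3 \<bullet> B t i = 0\<close> G_on[of 3 0 t] T
      by (cases "i = 0") (auto simp: numeral_eq_Suc less_Suc_eq)
  qed (use that G_on[of 3 3 t] G_on[of 2 3 t] in auto)
  have "G 0 2 \<bullet> B 0 0 = 0"
    using G_on[of 2 0 0] T by simp
  moreover have "G 0 2 \<bullet> B 0 1 = 0"
    using G2_perp[of 1 1] G3_perp G2_B_const[of 1 0 1] by auto
  moreover have "G 0 2 \<bullet> B 0 2 = 0"
    using G2_perp[of 2 2] G3_perp G2_B_const[of 2 0 2] by auto
  moreover have "G 0 2 \<bullet> B 0 3 = 0"
    using G2_perp[of 3 0] G3_perp by auto
  ultimately have "G 0 2 = 0"
    by (intro orthonormal_family_orthogonal_all_eq_0[OF onB]) (auto simp: numeral_eq_Suc less_Suc_eq)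
  then show False
    using G_on[of 2 2 0] by simp
qed

theorem proposition4:
  fixes \<gamma> :: "real \<Rightarrow> real^4" and B :: "real \<Rightarrow> nat \<Rightarrow> real^4"
  assumes "is_frame \<gamma> B" and "coeff_matrix B bishopB"
  shows "regular_curve \<gamma> \<and> \<not> (\<exists>F. typeC_frame \<gamma> F)"
proof
  show "regular_curve \<gamma>"
    using assms(1) by (rule is_frame_regular_curve)
  show "\<not> (\<exists>F. typeC_frame \<gamma> F)"
  proof
    assume "\<exists>F. typeC_frame \<gamma> F"
    then obtain G x1 x2 x3 where "is_frame \<gamma> G" and "coeff_matrix G (typeC_matrix x1 x2 x3)"
      by (blast elim: typeC_frame_reindexed)
    with bishopB_frame_not_typeC[OF assms] show False
      by blast
  qed
qed

end
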